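(* Let $R$ be an affine algebra over a field $K$ with no zero divisors which is not amenable. Then there exists a finite-dimensional $K$-subspace $Z\subseteq R$ such that for every nonzero finite-dimensional $K$-subspace $V\subseteq R$, $$\frac{\dim_K(VZ)}{\dim_K(V)}>2.$$
   Context: An affine algebra is a finitely generated associative algebra over $K$, not necessarily unital. For subspaces $V,Z$, $VZ$ denotes the $K$-span of all products $vz$, $v\in V$, $z\in Z$. $R$ is amenable if there exist finite-dimensional $K$-subspaces $W_1\subseteq W_2\subseteq\cdots$ with $\bigcup_nW_n=R$ such that for every $r\in R$, $\lim_{n\to\infty}\dim_K(W_nr+W_n)/\dim_K(W_n)=1$. *)

theory Defs
  imports Complex_Main
begin

text \<open>Setting: the algebra R is the whole carrier of a type 'a of class ring
(associative, not necessarily unital), which is a K-vector space via scale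
(K a type of class field), with K-bilinear multiplication.\<close>

definition alg_bilinear :: "('k::field \<Rightarrow> 'a::ring \<Rightarrow> 'a) \<Rightarrow> bool" where
  "alg_bilinear scale \<longleftrightarrow>
     (\<forall>c x y. scale c (x * y) = scale c x * y \<and> scale c (x * y) = x * scale c y)"

definition K_algebra :: "('k::field \<Rightarrow> 'a::ring \<Rightarrow> 'a) \<Rightarrow> bool" where
  "K_algebra scale \<longleftrightarrow> vector_space scale \<and> alg_bilinear scale"

definition fd_subspace :: "('k::field \<Rightarrow> 'a::ring \<Rightarrow> 'a) \<Rightarrow> 'a set \<Rightarrow> bool" where
  "fd_subspace scale V \<longleftrightarrow>
     module.subspace scale V \<and> (\<exists>B. finite B \<and> module.span scale B = V)"

definition subspace_prod :: "('k::field \<Rightarrow> 'a::ring \<Rightarrow> 'a) \<Rightarrow> 'a set \<Rightarrow> 'a set \<Rightarrow> 'a set" where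
  "subspace_prod scale V Z = module.span scale {v * z | v z. v \<in> V \<and> z \<in> Z}"

definition gen_subalgebra :: "('k::field \<Rightarrow> 'a::ring \<Rightarrow> 'a) \<Rightarrow> 'a set \<Rightarrow> 'a set" where
  "gen_subalgebra scale G =
     \<Inter>{S. module.subspace scale S \<and> G \<subseteq> S \<and> (\<forall>x\<in>S. \<forall>y\<in>S. x * y \<in> S)}"

definition affine_algebra :: "('k::field \<Rightarrow> 'a::ring \<Rightarrow> 'a) \<Rightarrow> bool" where
  "affine_algebra scale \<longleftrightarrow> K_algebra scale \<and>
     (\<exists>G. finite G \<and> gen_subalgebra scale G = UNIV)"

definition no_zero_divisors_alg :: "'a::ring itself \<Rightarrow> bool" where
  "no_zero_divisors_alg _ \<longleftrightarrow> (\<forall>x y::'a. x * y = 0 \<longrightarrow> x = 0 \<or> y = 0)"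

definition amenable_alg :: "('k::field \<Rightarrow> 'a::ring \<Rightarrow> 'a) \<Rightarrow> bool" where
  "amenable_alg scale \<longleftrightarrow>
     (\<exists>W :: nat \<Rightarrow> 'a set.
        (\<forall>n. fd_subspace scale (W n)) \<and> incseq W \<and> (\<Union>n. W n) = UNIV \<and>
        (\<forall>r. (\<lambda>n. real (vector_space.dim scale (module.span scale ((\<lambda>w. w * r) ` W n \<union> W n)))
                  / real (vector_space.dim scale (W n))) \<longlonglongrightarrow> 1))"

end

theory Submission
  imports Defs "HOL-Library.Set_Algebras"
begin

(* If R is not amenable, Folner subspaces fail uniformly: there are a finite-dimensional Z and
   \<epsilon> > 0 with dim (VZ + V) \<ge> (1 + \<epsilon>) dim V for all nonzero finite-dimensional V. Otherwise R
   is amenable: trivially if R is finite-dimensional, and if not, almost invariant subspaces can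
   be chosen of arbitrarily large dimension (a small one would be a finite-dimensional right
   ideal, into which left multiplication by a nonzero element embeds R), so that adding them to
   the filtration of R by word length in the generators yields a Folner exhaustion.
   For x \<noteq> 0 the subspace Z' = xZ + Kx gives VZ' = (Vx)Z + Vx, and v \<mapsto> vx is injective
   because R has no zero divisors, so dim (VZ') \<ge> (1 + \<epsilon>) dim V. By associativity of the
   product of subspaces, dim (V Z'^k) \<ge> (1 + \<epsilon>)^k dim V, and (1 + \<epsilon>)^k > 2 for large k. *)

lemma inj_mult_right:
  fixes x :: "'a::ring"
  assumes "no_zero_divisors_alg TYPE('a)" and "x \<noteq> 0"
  shows "inj (\<lambda>v. v * x)"
proof (rule injI)
  fix v w assume "v * x = w * x"
  then have "(v - w) * x = 0" by (simp add: left_diff_distrib)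
  with assms have "v - w = 0" unfolding no_zero_divisors_alg_def by blast
  then show "v = w" by simp
qed

lemma inj_mult_left:
  fixes x :: "'a::ring"
  assumes "no_zero_divisors_alg TYPE('a)" and "x \<noteq> 0"
  shows "inj (\<lambda>v. x * v)"
proof (rule injI)
  fix v w assume "x * v = x * w"
  then have "x * (v - w) = 0" by (simp add: right_diff_distrib)
  with assms have "v - w = 0" unfolding no_zero_divisors_alg_def by blast
  then show "v = w" by simp
qed

lemma set_times_singleton_right: "A * {x} = (\<lambda>a. a * x) ` A"
  by (auto simp: set_times_def)

locale field_algebra = vector_space scale
  for scale :: "'k::field \<Rightarrow> 'a::ring \<Rightarrow> 'a" +
  assumes scale_mult_left: "scale c (x * y) = scale c x * y"
    and scale_mult_right: "scale c (x * y) = x * scale c y"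

lemma field_algebra_if_K_algebra: "K_algebra scale \<Longrightarrow> field_algebra scale"
  unfolding K_algebra_def alg_bilinear_def field_algebra_def field_algebra_axioms_def by blast

context field_algebra
begin

section \<open>Products of subspaces\<close>

lemma linear_mult_right: "module_hom scale scale (\<lambda>u. u * x)"
  by unfold_locales (simp_all add: distrib_right scale_mult_left)

lemma linear_mult_left: "module_hom scale scale (\<lambda>u. x * u)"
  by unfold_locales (simp_all add: distrib_left scale_mult_right)

lemma mult_in_span_times:
  assumes "x \<in> span A" and "y \<in> span B"
  shows "x * y \<in> span (A * B)"
proof -
  interpret r: module_hom scale scale "\<lambda>u. u * y" by (rule linear_mult_right)
  have "a * y \<in> span (A * B)" if "a \<in> A" for a
  proof -
    interpret l: module_hom scale scale "\<lambda>u. a * u" by (rule linear_mult_left)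
    have "a * y \<in> span ((\<lambda>u. a * u) ` B)" using assms(2) l.span_image by auto
    also have "\<dots> \<subseteq> span (A * B)" using that by (intro span_mono) auto
    finally show ?thesis .
  qed
  then have "span ((\<lambda>u. u * y) ` A) \<subseteq> span (A * B)"
    by (intro span_minimal) auto
  with assms(1) r.span_image show ?thesis by auto
qed

lemma span_times_span: "span (span A * span B) = span (A * B)"
proof
  show "span (span A * span B) \<subseteq> span (A * B)"
    by (intro span_minimal) (auto elim!: set_times_elim intro: mult_in_span_times)
  show "span (A * B) \<subseteq> span (span A * span B)"
    by (intro span_mono set_times_mono2 span_superset)
qed

lemma span_times_span_left: "span (span A * B) = span (A * B)"
  using span_times_span[of "span A" B] span_times_span[of A B] by (simp add: span_span)

lemma span_times_span_right: "span (A * span B) = span (A * B)"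
  using span_times_span[of A "span B"] span_times_span[of A B] by (simp add: span_span)

lemma subspace_prod_eq: "subspace_prod scale V Z = span (V * Z)"
  unfolding subspace_prod_def by (rule arg_cong[where f = span]) (auto simp: set_times_def)

lemma subspace_prod_assoc:
  "subspace_prod scale (subspace_prod scale V A) B =
    subspace_prod scale V (subspace_prod scale A B)"
  by (simp add: subspace_prod_eq span_times_span_left span_times_span_right mult.assoc)

section \<open>Finite-dimensional subsets\<close>

definition finite_dim :: "'a set \<Rightarrow> bool" where
  "finite_dim S \<longleftrightarrow> (\<exists>B. finite B \<and> S \<subseteq> span B)"

lemma finite_dim_finite: "finite S \<Longrightarrow> finite_dim S"
  unfolding finite_dim_def using span_superset by blast

lemma finite_dim_subset: "S \<subseteq> T \<Longrightarrow> finite_dim T \<Longrightarrow> finite_dim S"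
  unfolding finite_dim_def by blast

lemma finite_dim_span [simp]: "finite_dim (span S) \<longleftrightarrow> finite_dim S"
  unfolding finite_dim_def by (meson span_minimal span_superset subspace_span subset_trans)

lemma finite_dim_Un [simp]: "finite_dim (S \<union> T) \<longleftrightarrow> finite_dim S \<and> finite_dim T"
proof
  assume "finite_dim S \<and> finite_dim T"
  then obtain B C where "finite B" "S \<subseteq> span B" "finite C" "T \<subseteq> span C"
    unfolding finite_dim_def by blast
  moreover have "span B \<subseteq> span (B \<union> C)" "span C \<subseteq> span (B \<union> C)"
    by (simp_all add: span_mono)
  ultimately have "finite (B \<union> C)" "S \<union> T \<subseteq> span (B \<union> C)" by blast+
  then show "finite_dim (S \<union> T)" unfolding finite_dim_def by blast
next
  assume "finite_dim (S \<union> T)"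
  then show "finite_dim S \<and> finite_dim T" by (meson finite_dim_subset Un_upper1 Un_upper2)
qed

lemma finite_dim_insert [simp]: "finite_dim (insert x S) \<longleftrightarrow> finite_dim S"
  using finite_dim_Un[of "{x}" S] finite_dim_finite[of "{x}"] by simp

lemma finite_dim_image:
  assumes "module_hom scale scale f" and "finite_dim S"
  shows "finite_dim (f ` S)"
proof -
  interpret f: module_hom scale scale f by fact
  obtain B where "finite B" "S \<subseteq> span B" using assms(2) unfolding finite_dim_def by blast
  then have "finite (f ` B)" "f ` S \<subseteq> span (f ` B)" by (auto simp: f.span_image)
  then show ?thesis unfolding finite_dim_def by blast
qed

lemma finite_dim_times:
  assumes "finite_dim A" and "finite_dim B"
  shows "finite_dim (A * B)"
proof -
  obtain C D where "finite C" "A \<subseteq> span C" "finite D" "B \<subseteq> span D"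
    using assms unfolding finite_dim_def by blast
  then have "finite (C * D)" "A * B \<subseteq> span (C * D)"
    by (auto simp: finite_set_times elim!: set_times_elim intro: mult_in_span_times)
  then show ?thesis unfolding finite_dim_def by blast
qed

lemma finite_dim_basis:
  assumes "finite_dim S"
  obtains C where "finite C" "C \<subseteq> S" "independent C" "S \<subseteq> span C" "card C = dim S"
proof -
  obtain B where B: "finite B" "S \<subseteq> span B" using assms unfolding finite_dim_def by blast
  obtain C where C: "C \<subseteq> S" "independent C" "S \<subseteq> span C" "card C = dim S"
    by (rule basis_exists)
  have "finite C" using independent_span_bound[OF B(1) C(2)] C(1) B(2) by auto
  with C that show ?thesis by blast
qed

lemma finite_dim_if_inj_image:
  assumes "module_hom scale scale f" and "inj f" and "finite_dim (f ` S)"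
  shows "finite_dim S"
proof -
  interpret f: module_hom scale scale f by fact
  obtain B where B: "finite B" "f ` S \<subseteq> span B" using assms(3) unfolding finite_dim_def by blast
  obtain C where C: "C \<subseteq> S" "independent C" "S \<subseteq> span C" by (rule basis_exists)
  have "independent (f ` C)"
    using f.independent_injective_image[OF C(2)] assms(2) inj_on_subset by blast
  moreover have "f ` C \<subseteq> span B" using B(2) C(1) by blast
  ultimately have "finite (f ` C)" using independent_span_bound[OF B(1)] by blast
  then have "finite C" using finite_imageD assms(2) inj_on_subset by blast
  with C(3) show ?thesis unfolding finite_dim_def by blast
qed

lemma fd_subspace_iff: "fd_subspace scale V \<longleftrightarrow> subspace V \<and> finite_dim V"
proof
  assume "subspace V \<and> finite_dim V"
  then obtain C where "finite C" "C \<subseteq> V" "V \<subseteq> span C" "subspace V"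
    by (meson finite_dim_basis)
  then have "span C = V" by (simp add: span_subspace)
  with \<open>finite C\<close> \<open>subspace V\<close> show "fd_subspace scale V" unfolding fd_subspace_def by blast
qed (auto simp: fd_subspace_def finite_dim_def)

lemma fd_subspace_span: "finite_dim S \<Longrightarrow> fd_subspace scale (span S)"
  by (simp add: fd_subspace_iff)

lemma fd_subspace_prod:
  "fd_subspace scale V \<Longrightarrow> fd_subspace scale Z \<Longrightarrow> fd_subspace scale (subspace_prod scale V Z)"
  by (simp add: fd_subspace_iff subspace_prod_eq finite_dim_times)

lemma dim_le_if_subset_span:
  assumes "S \<subseteq> span T" and "finite_dim T"
  shows "dim S \<le> dim T"
proof -
  obtain C where C: "finite C" "T \<subseteq> span C" "card C = dim T"
    using assms(2) by (rule finite_dim_basis)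
  have "S \<subseteq> span C" using assms(1) C(2) by (meson span_minimal subspace_span subset_trans)
  then have "dim S \<le> card C" using C(1) by (rule dim_le_card)
  with C(3) show ?thesis by simp
qed

lemma dim_mono_finite_dim: "S \<subseteq> T \<Longrightarrow> finite_dim T \<Longrightarrow> dim S \<le> dim T"
  by (meson dim_le_if_subset_span span_superset subset_trans)

lemma dim_Un_le:
  assumes "finite_dim S" and "finite_dim T"
  shows "dim (S \<union> T) \<le> dim S + dim T"
proof -
  obtain B where B: "finite B" "S \<subseteq> span B" "card B = dim S"
    using assms(1) by (rule finite_dim_basis)
  obtain C where C: "finite C" "T \<subseteq> span C" "card C = dim T"
    using assms(2) by (rule finite_dim_basis)
  have "S \<union> T \<subseteq> span (B \<union> C)"
    using B(2) C(2) span_mono[of B "B \<union> C"] span_mono[of C "B \<union> C"] by auto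
  then have "dim (S \<union> T) \<le> card (B \<union> C)" using B(1) C(1) by (simp add: dim_le_card)
  also have "\<dots> \<le> card B + card C" by (rule card_Un_le)
  finally show ?thesis using B(3) C(3) by simp
qed

lemma dim_image_le:
  assumes "module_hom scale scale f" and "finite_dim S"
  shows "dim (f ` S) \<le> dim S"
proof -
  interpret f: module_hom scale scale f by fact
  obtain C where C: "finite C" "S \<subseteq> span C" "card C = dim S"
    using assms(2) by (rule finite_dim_basis)
  have "f ` S \<subseteq> span (f ` C)" using C(2) f.spans_image by blast
  then have "dim (f ` S) \<le> card (f ` C)" using C(1) by (simp add: dim_le_card)
  also have "\<dots> \<le> card C" using C(1) by (rule card_image_le)
  finally show ?thesis using C(3) by simp
qed

lemma dim_inj_image:
  assumes "module_hom scale scale f" and "inj f"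
  shows "dim (f ` S) = dim S"
proof -
  interpret f: module_hom scale scale f by fact
  obtain C where C: "C \<subseteq> S" "independent C" "S \<subseteq> span C" "card C = dim S"
    by (rule basis_exists)
  have "independent (f ` C)"
    using f.independent_injective_image[OF C(2)] assms(2) inj_on_subset by blast
  moreover have "f ` S \<subseteq> span (f ` C)" using C(3) f.spans_image by blast
  ultimately have "card (f ` C) = dim (f ` S)" using C(1) by (intro basis_card_eq_dim) auto
  moreover have "card (f ` C) = card C" using assms(2) inj_on_subset card_image by blast
  ultimately show ?thesis using C(4) by simp
qed

lemma subspace_eq_if_dim_le:
  assumes "subspace S" "S \<subseteq> T" "finite_dim T" "dim T \<le> dim S"
  shows "S = T"
proof (rule ccontr)
  assume "S \<noteq> T"
  then obtain t where t: "t \<in> T" "t \<notin> S" using assms(2) by auto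
  obtain C where C: "finite C" "C \<subseteq> S" "independent C" "S \<subseteq> span C" "card C = dim S"
    using finite_dim_subset[OF assms(2,3)] by (rule finite_dim_basis)
  have "t \<notin> span C" using t(2) C(2) assms(1) span_minimal by blast
  then have "independent (insert t C)" "t \<notin> C"
    using independent_insertI[OF _ C(3)] span_superset by auto
  moreover have "insert t C \<subseteq> T" using t(1) C(2) assms(2) by blast
  ultimately have "card (insert t C) \<le> dim T"
    using assms(3) by (metis dim_mono_finite_dim dim_eq_card_independent)
  with C(1,5) \<open>t \<notin> C\<close> assms(4) show False by simp
qed

lemma dim_singleton_zero [simp]: "dim {0} = 0"
  by (metis dim_span span_empty dim_eq_card_independent independent_empty card.empty)

lemma dim_pos_if_fd_subspace:
  assumes "fd_subspace scale V" and "V \<noteq> {0}"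
  shows "0 < dim V"
proof (rule ccontr)
  assume "\<not> 0 < dim V"
  obtain C where "C \<subseteq> V" "V \<subseteq> span C" "card C = dim V" "finite C"
    using assms(1) unfolding fd_subspace_iff by (meson finite_dim_basis)
  with \<open>\<not> 0 < dim V\<close> have "V \<subseteq> {0}" by simp
  moreover have "0 \<in> V" using assms(1) by (simp add: fd_subspace_iff subspace_0)
  ultimately show False using assms(2) by blast
qed

section \<open>Generators and the word-length filtration\<close>

lemma gen_subalgebra_subset:
  assumes "subspace S" and "G \<subseteq> S" and "S * S \<subseteq> S"
  shows "gen_subalgebra scale G \<subseteq> S"
proof -
  have "S \<in> {S. subspace S \<and> G \<subseteq> S \<and> (\<forall>x\<in>S. \<forall>y\<in>S. x * y \<in> S)}"
    using assms by (auto intro: set_times_intro)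
  then show ?thesis unfolding gen_subalgebra_def by (rule Inter_lower)
qed

lemma times_UNIV_subset_of_generators:
  assumes "gen_subalgebra scale G = UNIV" and "subspace S" and "S * G \<subseteq> S"
  shows "S * UNIV \<subseteq> S"
proof -
  define T where "T = {y. \<forall>s\<in>S. s * y \<in> S}"
  have "subspace T"
  proof (rule subspaceI)
    show "0 \<in> T" unfolding T_def using assms(2) subspace_0 by simp
    show "y + z \<in> T" if "y \<in> T" "z \<in> T" for y z
      using that assms(2) unfolding T_def by (simp add: distrib_left subspace_add)
    show "scale c y \<in> T" if "y \<in> T" for c y
      using that assms(2) unfolding T_def
      by (auto simp: scale_mult_right[symmetric] intro: subspace_scale)
  qed
  moreover have "G \<subseteq> T" using assms(3) unfolding T_def by (auto intro: set_times_intro)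
  moreover have "T * T \<subseteq> T"
  proof
    fix p assume "p \<in> T * T"
    then obtain y z where p: "p = y * z" and "y \<in> T" "z \<in> T" by (rule set_times_elim)
    then have "(s * y) * z \<in> S" if "s \<in> S" for s using that unfolding T_def by blast
    then show "p \<in> T" unfolding T_def p by (simp add: mult.assoc)
  qed
  ultimately have "gen_subalgebra scale G \<subseteq> T" by (rule gen_subalgebra_subset)
  then have "s * y \<in> S" if "s \<in> S" for s y using assms(1) that unfolding T_def by blast
  then show ?thesis by (auto elim: set_times_elim)
qed

lemma subspace_UN_incseq:
  assumes "incseq A" and "\<And>n. subspace (A n)"
  shows "subspace (\<Union>n. A n)"
proof (rule subspaceI)
  show "0 \<in> (\<Union>n. A n)" using assms(2) subspace_0 by blast
  show "x + y \<in> (\<Union>n. A n)" if xy: "x \<in> (\<Union>n. A n)" "y \<in> (\<Union>n. A n)" for x y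
  proof -
    obtain m n where "x \<in> A m" "y \<in> A n" using xy by blast
    then have "x \<in> A (max m n)" "y \<in> A (max m n)"
      using monoD[OF assms(1)] max.cobounded1 max.cobounded2 by blast+
    then show ?thesis using assms(2) subspace_add by blast
  qed
  show "scale c x \<in> (\<Union>n. A n)" if "x \<in> (\<Union>n. A n)" for c x
    using that assms(2) subspace_scale by blast
qed

primrec filtration :: "'a set \<Rightarrow> nat \<Rightarrow> 'a set" where
  "filtration G 0 = span G"
| "filtration G (Suc n) = span (filtration G n \<union> filtration G n * G)"

lemma subspace_filtration: "subspace (filtration G n)"
  by (cases n) simp_all

lemma incseq_filtration: "incseq (filtration G)"
  by (rule incseq_SucI) (simp add: span_superset[THEN subset_trans[OF Un_upper1]])

lemma times_generators_subset_filtration: "filtration G n * G \<subseteq> filtration G (Suc n)"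
  by (simp add: span_superset[THEN subset_trans[OF Un_upper2]])

lemma generators_subset_filtration: "G \<subseteq> filtration G n"
  using monoD[OF incseq_filtration, of 0 n] span_superset by auto

lemma finite_dim_filtration: "finite G \<Longrightarrow> finite_dim (filtration G n)"
  by (induction n) (simp_all add: finite_dim_finite finite_dim_times)

lemma UN_filtration:
  assumes "gen_subalgebra scale G = UNIV"
  shows "(\<Union>n. filtration G n) = UNIV"
proof -
  let ?S = "\<Union>n. filtration G n"
  have "subspace ?S" by (intro subspace_UN_incseq incseq_filtration subspace_filtration)
  moreover have "?S * G \<subseteq> ?S"
  proof
    fix p assume "p \<in> ?S * G"
    then obtain n x g where "p = x * g" "x \<in> filtration G n" "g \<in> G"
      by (auto elim: set_times_elim)
    then have "p \<in> filtration G (Suc n)" using times_generators_subset_filtration by blast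
    then show "p \<in> ?S" by blast
  qed
  ultimately have "?S * UNIV \<subseteq> ?S" using assms by (rule times_UNIV_subset_of_generators[rotated])
  then have "?S * ?S \<subseteq> ?S" by (meson set_times_mono2 subset_UNIV subset_refl subset_trans)
  moreover have "G \<subseteq> ?S" using generators_subset_filtration by blast
  ultimately have "gen_subalgebra scale G \<subseteq> ?S"
    using \<open>subspace ?S\<close> by (intro gen_subalgebra_subset)
  with assms show ?thesis by blast
qed

section \<open>Almost invariant subspaces and amenability\<close>

definition almost_invariant :: "'a set \<Rightarrow> real \<Rightarrow> 'a set \<Rightarrow> bool" where
  "almost_invariant Z \<epsilon> V \<longleftrightarrow> fd_subspace scale V \<and> V \<noteq> {0} \<and>
     real (dim (span (V * Z \<union> V))) \<le> (1 + \<epsilon>) * real (dim V)"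

lemma almost_invariant_mono:
  assumes "almost_invariant Z \<epsilon> V" and "\<epsilon> \<le> \<epsilon>'"
  shows "almost_invariant Z \<epsilon>' V"
proof -
  have "(1 + \<epsilon>) * real (dim V) \<le> (1 + \<epsilon>') * real (dim V)"
    using assms(2) by (intro mult_right_mono) simp_all
  with assms(1) show ?thesis unfolding almost_invariant_def by linarith
qed

lemma invariant_if_almost_invariant:
  assumes "almost_invariant Z \<epsilon> V" and "finite_dim Z" and "\<epsilon> * real (dim V) < 1"
  shows "V * Z \<subseteq> V"
proof -
  let ?F = "span (V * Z \<union> V)"
  have V: "subspace V" "finite_dim V"
    using assms(1) by (simp_all add: almost_invariant_def fd_subspace_iff)
  have "real (dim ?F) < real (dim V) + 1"
    using assms(1,3) unfolding almost_invariant_def by (simp add: algebra_simps)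
  then have "dim ?F \<le> dim V" by linarith
  moreover have "V \<subseteq> ?F" by (meson Un_upper2 span_superset subset_trans)
  moreover have "finite_dim ?F" using V(2) assms(2) by (simp add: finite_dim_times)
  ultimately have "V = ?F" using V(1) subspace_eq_if_dim_le by blast
  then show ?thesis by (metis Un_upper1 span_superset subset_trans)
qed

lemma finite_dim_UNIV_if_right_ideal:
  assumes "no_zero_divisors_alg TYPE('a)" and "finite_dim V" and "v \<in> V" "v \<noteq> 0"
    and "V * UNIV \<subseteq> V"
  shows "finite_dim (UNIV :: 'a set)"
proof -
  have "range (\<lambda>y. v * y) \<subseteq> V" using assms(3,5) by (auto intro: set_times_intro)
  then have "finite_dim (range (\<lambda>y. v * y))" using assms(2) by (rule finite_dim_subset)
  then show ?thesis
    using finite_dim_if_inj_image[OF linear_mult_left inj_mult_left[OF assms(1,4)]] by blast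
qed

lemma exists_large_almost_invariant:
  assumes gen: "gen_subalgebra scale G = UNIV" and nzd: "no_zero_divisors_alg TYPE('a)"
    and infinite_dim: "\<not> finite_dim (UNIV :: 'a set)"
    and almost: "\<And>Z \<epsilon>. fd_subspace scale Z \<Longrightarrow> 0 < \<epsilon> \<Longrightarrow> \<exists>V. almost_invariant Z \<epsilon> V"
    and Z: "fd_subspace scale Z" "G \<subseteq> Z" and "0 < \<epsilon>"
  shows "\<exists>V. almost_invariant Z \<epsilon> V \<and> N \<le> dim V"
proof -
  define \<epsilon>' where "\<epsilon>' = min \<epsilon> (1 / (real N + 1))"
  have "0 < \<epsilon>'" using \<open>0 < \<epsilon>\<close> by (simp add: \<epsilon>'_def)
  then obtain V where V: "almost_invariant Z \<epsilon>' V" using almost Z(1) by blast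
  then have V_fd: "subspace V" "finite_dim V" "V \<noteq> {0}"
    by (simp_all add: almost_invariant_def fd_subspace_iff)
  have "N \<le> dim V"
  proof (rule ccontr)
    assume "\<not> N \<le> dim V"
    have "\<epsilon>' * real (dim V) \<le> 1 / (real N + 1) * real (dim V)"
      by (intro mult_right_mono) (simp_all add: \<epsilon>'_def)
    also have "\<dots> < 1" using \<open>\<not> N \<le> dim V\<close> by (simp add: field_simps)
    finally have "V * Z \<subseteq> V"
      using V Z(1) by (intro invariant_if_almost_invariant) (simp_all add: fd_subspace_iff)
    then have "V * G \<subseteq> V" using Z(2) by (meson set_times_mono2 subset_refl subset_trans)
    with gen V_fd(1) have "V * UNIV \<subseteq> V" by (rule times_UNIV_subset_of_generators)
    moreover obtain v where "v \<in> V" "v \<noteq> 0" using V_fd(1,3) subspace_0 by blast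
    ultimately have "finite_dim (UNIV :: 'a set)"
      using nzd V_fd(2) finite_dim_UNIV_if_right_ideal by blast
    with infinite_dim show False ..
  qed
  moreover have "almost_invariant Z \<epsilon> V"
    using V by (rule almost_invariant_mono) (simp add: \<epsilon>'_def)
  ultimately show ?thesis by blast
qed

lemma dim_right_translate_le:
  assumes "finite_dim A" and "finite_dim V" and "finite_dim Z" and "r \<in> Z"
  shows "dim (span ((\<lambda>w. w * r) ` span (A \<union> V) \<union> span (A \<union> V)))
    \<le> 2 * dim A + dim (span (V * Z \<union> V))"
proof -
  let ?f = "\<lambda>w. w * r"
  let ?B = "?f ` A \<union> A \<union> span (V * Z \<union> V)"
  interpret f: module_hom scale scale ?f by (rule linear_mult_right)
  have "?f ` V \<subseteq> V * Z" using assms(4) by (auto intro: set_times_intro)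
  then have "?f ` (A \<union> V) \<subseteq> ?B" and "A \<union> V \<subseteq> ?B" using span_superset by blast+
  then have "?f ` span (A \<union> V) \<union> span (A \<union> V) \<subseteq> span ?B"
    unfolding f.span_image[symmetric] by (meson Un_least span_mono)
  moreover have "finite_dim ?B"
    using assms by (simp add: finite_dim_image[OF linear_mult_right] finite_dim_times)
  ultimately have "dim (?f ` span (A \<union> V) \<union> span (A \<union> V)) \<le> dim ?B"
    by (rule dim_le_if_subset_span)
  also have "\<dots> \<le> dim (?f ` A) + dim A + dim (span (V * Z \<union> V))"
    using assms by (intro order.trans[OF dim_Un_le] add_right_mono dim_Un_le)
      (simp_all add: finite_dim_image[OF linear_mult_right] finite_dim_times)
  also have "dim (?f ` A) \<le> dim A" using linear_mult_right assms(1) by (rule dim_image_le)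
  finally show ?thesis by simp
qed

lemma almost_invariant_extension_bound:
  assumes V: "almost_invariant Z \<epsilon> V" and "finite_dim Z" and "r \<in> Z"
    and "finite_dim A" and small: "real (dim A) \<le> \<epsilon> * real (dim V)" and "0 \<le> \<epsilon>"
  shows "real (dim (span ((\<lambda>w. w * r) ` span (A \<union> V) \<union> span (A \<union> V))))
    \<le> (1 + 3 * \<epsilon>) * real (dim (span (A \<union> V)))"
proof -
  have "finite_dim V" using V by (simp add: almost_invariant_def fd_subspace_iff)
  then have "real (dim (span ((\<lambda>w. w * r) ` span (A \<union> V) \<union> span (A \<union> V))))
      \<le> real (2 * dim A + dim (span (V * Z \<union> V)))"
    using assms(2-4) by (simp only: of_nat_le_iff dim_right_translate_le)
  also have "\<dots> = 2 * real (dim A) + real (dim (span (V * Z \<union> V)))" by simp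
  also have "\<dots> \<le> (1 + 3 * \<epsilon>) * real (dim V)"
    using small V unfolding almost_invariant_def by (simp add: algebra_simps)
  also have "\<dots> \<le> (1 + 3 * \<epsilon>) * real (dim (span (A \<union> V)))"
    using \<open>finite_dim V\<close> \<open>finite_dim A\<close> \<open>0 \<le> \<epsilon>\<close>
    by (intro mult_left_mono) (simp_all add: dim_mono_finite_dim)
  finally show ?thesis .
qed

lemma amenable_algI:
  assumes "\<And>n. fd_subspace scale (W n)" and "incseq W" and "(\<Union>n. W n) = UNIV"
    and "\<delta> \<longlonglongrightarrow> 0"
    and "\<And>r. \<forall>\<^sub>F n in sequentially. W n \<noteq> {0} \<and>
      real (dim (span ((\<lambda>w. w * r) ` W n \<union> W n))) \<le> (1 + \<delta> n) * real (dim (W n))"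
  shows "amenable_alg scale"
  unfolding amenable_alg_def
proof (intro exI[of _ W] conjI allI assms(1-3))
  fix r
  let ?q = "\<lambda>n. real (dim (span ((\<lambda>w. w * r) ` W n \<union> W n))) / real (dim (W n))"
  have "\<forall>\<^sub>F n in sequentially. 1 \<le> ?q n \<and> ?q n \<le> 1 + \<delta> n"
    using assms(5)[of r]
  proof (rule eventually_mono)
    fix n
    assume n: "W n \<noteq> {0} \<and>
      real (dim (span ((\<lambda>w. w * r) ` W n \<union> W n))) \<le> (1 + \<delta> n) * real (dim (W n))"
    have "W n \<subseteq> span ((\<lambda>w. w * r) ` W n \<union> W n)" by (meson Un_upper2 span_superset subset_trans)
    moreover have "finite_dim (span ((\<lambda>w. w * r) ` W n \<union> W n))"
      using assms(1)[of n] by (simp add: fd_subspace_iff finite_dim_image[OF linear_mult_right])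
    ultimately have "dim (W n) \<le> dim (span ((\<lambda>w. w * r) ` W n \<union> W n))"
      by (rule dim_mono_finite_dim)
    moreover have "0 < dim (W n)"
      using assms(1) n by (rule dim_pos_if_fd_subspace[OF _ conjunct1])
    ultimately show "1 \<le> ?q n \<and> ?q n \<le> 1 + \<delta> n"
      using n by (simp add: le_divide_eq_1_pos pos_divide_le_eq)
  qed
  then have "\<forall>\<^sub>F n in sequentially. 1 \<le> ?q n" and "\<forall>\<^sub>F n in sequentially. ?q n \<le> 1 + \<delta> n"
    by (auto elim: eventually_mono)
  moreover have "(\<lambda>n. 1 + \<delta> n) \<longlonglongrightarrow> 1" using tendsto_add[OF tendsto_const assms(4)] by simp
  ultimately show "?q \<longlonglongrightarrow> 1" by (rule tendsto_sandwich[OF _ _ tendsto_const])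
qed

lemma exists_almost_invariant_extension:
  assumes "finite G" and gen: "gen_subalgebra scale G = UNIV"
    and nzd: "no_zero_divisors_alg TYPE('a)" and infinite_dim: "\<not> finite_dim (UNIV :: 'a set)"
    and almost: "\<And>Z \<epsilon>. fd_subspace scale Z \<Longrightarrow> 0 < \<epsilon> \<Longrightarrow> \<exists>V. almost_invariant Z \<epsilon> V"
    and "finite_dim A"
  shows "\<exists>W. fd_subspace scale W \<and> A \<subseteq> W \<and> W \<noteq> {0} \<and> (\<forall>r \<in> filtration G n.
    real (dim (span ((\<lambda>w. w * r) ` W \<union> W))) \<le> (1 + 3 / Suc n) * real (dim W))"
proof -
  have F: "fd_subspace scale (filtration G n)" "finite_dim (filtration G n)"
    using finite_dim_filtration[OF \<open>finite G\<close>]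
    by (simp_all add: fd_subspace_iff subspace_filtration)
  obtain V where V: "almost_invariant (filtration G n) (1 / Suc n) V" and "Suc n * dim A \<le> dim V"
    using exists_large_almost_invariant[OF gen nzd infinite_dim almost F(1)
        generators_subset_filtration, of "1 / Suc n" "Suc n * dim A"] by auto
  then have "real (Suc n * dim A) \<le> real (dim V)" by (simp only: of_nat_le_iff)
  then have small: "real (dim A) \<le> 1 / Suc n * real (dim V)" by (simp add: field_simps)
  have "subspace V" "V \<noteq> {0}" "finite_dim V"
    using V by (simp_all add: almost_invariant_def fd_subspace_iff)
  show ?thesis
  proof (intro exI[of _ "span (A \<union> V)"] conjI ballI)
    show "fd_subspace scale (span (A \<union> V))"
      using \<open>finite_dim A\<close> \<open>finite_dim V\<close> by (simp add: fd_subspace_span)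
    show "A \<subseteq> span (A \<union> V)" by (meson Un_upper1 span_superset subset_trans)
    have "V \<subseteq> span (A \<union> V)" by (meson Un_upper2 span_superset subset_trans)
    then show "span (A \<union> V) \<noteq> {0}"
      using \<open>subspace V\<close> \<open>V \<noteq> {0}\<close> subspace_0 by (metis subset_singletonD empty_iff)
    fix r assume "r \<in> filtration G n"
    with V F(2) \<open>finite_dim A\<close> small
    have "real (dim (span ((\<lambda>w. w * r) ` span (A \<union> V) \<union> span (A \<union> V))))
        \<le> (1 + 3 * (1 / Suc n)) * real (dim (span (A \<union> V)))"
      by (intro almost_invariant_extension_bound) simp_all
    then show "real (dim (span ((\<lambda>w. w * r) ` span (A \<union> V) \<union> span (A \<union> V))))
        \<le> (1 + 3 / Suc n) * real (dim (span (A \<union> V)))"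
      by simp
  qed
qed

lemma amenable_if_almost_invariant_infinite_dim:
  assumes "finite G" and gen: "gen_subalgebra scale G = UNIV"
    and "no_zero_divisors_alg TYPE('a)" and "\<not> finite_dim (UNIV :: 'a set)"
    and "\<And>Z \<epsilon>. fd_subspace scale Z \<Longrightarrow> 0 < \<epsilon> \<Longrightarrow> \<exists>V. almost_invariant Z \<epsilon> V"
  shows "amenable_alg scale"
proof -
  let ?F = "filtration G"
  let ?folner = "\<lambda>A n W. fd_subspace scale W \<and> A \<subseteq> W \<and> W \<noteq> {0} \<and> (\<forall>r \<in> ?F n.
    real (dim (span ((\<lambda>w. w * r) ` W \<union> W))) \<le> (1 + 3 / Suc n) * real (dim W))"
  define extend where "extend A n = (SOME W. ?folner A n W)" for A n
  have extend: "?folner A n (extend A n)" if "finite_dim A" for A n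
    unfolding extend_def
    by (rule someI_ex) (rule exists_almost_invariant_extension[OF assms that])
  define W where "W = rec_nat {0} (\<lambda>n W. extend (W \<union> ?F n) n)"
  have W_0: "W 0 = {0}" and W_Suc: "W (Suc n) = extend (W n \<union> ?F n) n" for n
    by (simp_all add: W_def)
  have F_fd: "finite_dim (?F n)" for n using \<open>finite G\<close> by (rule finite_dim_filtration)
  have W_fd: "fd_subspace scale (W n)" for n
  proof (induction n)
    case 0
    show ?case using fd_subspace_span[of "{}"] by (simp add: W_0 finite_dim_finite)
  next
    case (Suc n)
    then show ?case using extend F_fd by (simp add: W_Suc fd_subspace_iff)
  qed
  have W_step: "?folner (W n \<union> ?F n) n (W (Suc n))" for n
    unfolding W_Suc using W_fd[of n] F_fd by (intro extend) (simp add: fd_subspace_iff)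
  have W_mono: "W n \<subseteq> W (Suc n)" and F_W: "?F n \<subseteq> W (Suc n)" for n
    using W_step[of n] by simp_all
  have "incseq W" using W_mono by (rule incseq_SucI)
  moreover have "(\<Union>n. W n) = UNIV"
  proof -
    have "x \<in> (\<Union>n. W n)" for x
    proof -
      obtain n where "x \<in> ?F n" using UN_filtration[OF gen] by (metis UNIV_I UN_iff)
      with F_W show ?thesis by blast
    qed
    then show ?thesis by blast
  qed
  moreover have "(\<lambda>n. 3 / real n) \<longlonglongrightarrow> 0" by (rule lim_const_over_n)
  moreover have "\<forall>\<^sub>F n in sequentially. W n \<noteq> {0} \<and>
      real (dim (span ((\<lambda>w. w * r) ` W n \<union> W n))) \<le> (1 + 3 / real n) * real (dim (W n))" for r
  proof -
    obtain m where "r \<in> ?F m" using UN_filtration[OF gen] by (metis UNIV_I UN_iff)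
    show ?thesis unfolding eventually_sequentially
    proof (intro exI[of _ "Suc m"] allI impI)
      fix n assume "Suc m \<le> n"
      then obtain k where "n = Suc k" and "m \<le> k" using Suc_le_D by auto
      then have "r \<in> ?F k" using \<open>r \<in> ?F m\<close> monoD[OF incseq_filtration] by blast
      with W_step[of k] \<open>n = Suc k\<close> show "W n \<noteq> {0} \<and>
          real (dim (span ((\<lambda>w. w * r) ` W n \<union> W n))) \<le> (1 + 3 / real n) * real (dim (W n))"
        by simp
    qed
  qed
  ultimately show ?thesis using W_fd by (intro amenable_algI)
qed

lemma amenable_if_almost_invariant:
  assumes "finite G" and "gen_subalgebra scale G = UNIV" and "no_zero_divisors_alg TYPE('a)"
    and almost: "\<And>Z \<epsilon>. fd_subspace scale Z \<Longrightarrow> 0 < \<epsilon> \<Longrightarrow> \<exists>V. almost_invariant Z \<epsilon> V"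
  shows "amenable_alg scale"
proof (cases "finite_dim (UNIV :: 'a set)")
  case True
  obtain V where "almost_invariant {0} 1 V"
    using almost[of "{0}" 1] fd_subspace_span[of "{}"] finite_dim_finite[of "{}"] by auto
  then have "subspace V" "V \<noteq> {0}" by (simp_all add: almost_invariant_def fd_subspace_iff)
  then have "UNIV \<noteq> {0 :: 'a}" using subspace_0 by blast
  show ?thesis
  proof (rule amenable_algI[where W = "\<lambda>_. UNIV" and \<delta> = "\<lambda>_. 0"])
    show "fd_subspace scale UNIV" using True by (simp add: fd_subspace_iff)
  qed (use \<open>UNIV \<noteq> {0}\<close> in simp_all)
next
  case False
  with assms(1-3) show ?thesis using almost by (rule amenable_if_almost_invariant_infinite_dim)
qed

section \<open>Uniform expansion\<close>

definition expands_by :: "'a set \<Rightarrow> real \<Rightarrow> bool" where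
  "expands_by Z c \<longleftrightarrow> fd_subspace scale Z \<and>
     (\<forall>V. fd_subspace scale V \<and> V \<noteq> {0} \<longrightarrow>
        c * real (dim V) \<le> real (dim (subspace_prod scale V Z)))"

lemma expands_by_prod:
  assumes Z\<^sub>1: "expands_by Z\<^sub>1 c\<^sub>1" and Z\<^sub>2: "expands_by Z\<^sub>2 c\<^sub>2" and "0 < c\<^sub>1" and "0 \<le> c\<^sub>2"
  shows "expands_by (subspace_prod scale Z\<^sub>1 Z\<^sub>2) (c\<^sub>1 * c\<^sub>2)"
  unfolding expands_by_def
proof (intro conjI allI impI)
  show "fd_subspace scale (subspace_prod scale Z\<^sub>1 Z\<^sub>2)"
    using Z\<^sub>1 Z\<^sub>2 by (simp add: expands_by_def fd_subspace_prod)
  fix V assume V: "fd_subspace scale V \<and> V \<noteq> {0}"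
  let ?U = "subspace_prod scale V Z\<^sub>1"
  have U: "c\<^sub>1 * real (dim V) \<le> real (dim ?U)" using Z\<^sub>1 V by (simp add: expands_by_def)
  moreover have "0 < c\<^sub>1 * real (dim V)" using V dim_pos_if_fd_subspace \<open>0 < c\<^sub>1\<close> by simp
  ultimately have "?U \<noteq> {0}" by (metis dim_singleton_zero of_nat_0 not_le)
  moreover have "fd_subspace scale ?U" using V Z\<^sub>1 by (simp add: expands_by_def fd_subspace_prod)
  ultimately have "c\<^sub>2 * real (dim ?U) \<le> real (dim (subspace_prod scale ?U Z\<^sub>2))"
    using Z\<^sub>2 by (simp add: expands_by_def)
  moreover have "c\<^sub>1 * c\<^sub>2 * real (dim V) \<le> c\<^sub>2 * real (dim ?U)"
    using mult_left_mono[OF U \<open>0 \<le> c\<^sub>2\<close>] by (simp add: ac_simps)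
  ultimately show "c\<^sub>1 * c\<^sub>2 * real (dim V)
      \<le> real (dim (subspace_prod scale V (subspace_prod scale Z\<^sub>1 Z\<^sub>2)))"
    by (simp add: subspace_prod_assoc)
qed

lemma expands_by_power:
  assumes "expands_by Z c" and "0 < c"
  shows "\<exists>Z'. expands_by Z' (c ^ Suc k)"
proof (induction k)
  case 0
  then show ?case using assms(1) by auto
next
  case (Suc k)
  then obtain Z' where "expands_by Z' (c ^ Suc k)" by blast
  then have "expands_by (subspace_prod scale Z' Z) (c ^ Suc k * c)"
    using assms by (intro expands_by_prod) simp_all
  then show ?case by (subst power_Suc2) blast
qed

lemma exists_expands_by_gt:
  assumes "expands_by Z c" and "1 < c"
  shows "\<exists>Z' c'. b < c' \<and> expands_by Z' c'"
proof -
  obtain k where "b < c ^ k" using real_arch_pow \<open>1 < c\<close> by blast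
  also have "\<dots> \<le> c ^ Suc k" using \<open>1 < c\<close> by simp
  finally show ?thesis using expands_by_power[OF assms(1)] \<open>1 < c\<close> by fastforce
qed

lemma expands_by_ratio:
  assumes "expands_by Z c" and "fd_subspace scale V" and "V \<noteq> {0}"
  shows "c \<le> real (dim (subspace_prod scale V Z)) / real (dim V)"
  using assms dim_pos_if_fd_subspace[OF assms(2,3)] by (simp add: expands_by_def pos_le_divide_eq)

lemma expands_by_if_growth:
  assumes nzd: "no_zero_divisors_alg TYPE('a)" and "fd_subspace scale Z"
    and growth: "\<And>V. fd_subspace scale V \<Longrightarrow> V \<noteq> {0} \<Longrightarrow>
      c * real (dim V) \<le> real (dim (span (V * Z \<union> V)))"
  shows "\<exists>Z'. expands_by Z' c"
proof (cases "\<exists>x::'a. x \<noteq> 0")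
  case False
  have "V = {0}" if "fd_subspace scale V" for V
    using that False subspace_0 unfolding fd_subspace_iff by blast
  moreover have "fd_subspace scale {0}" using fd_subspace_span[of "{}"] finite_dim_finite by simp
  ultimately have "expands_by {0} c" unfolding expands_by_def by blast
  then show ?thesis ..
next
  case True
  then obtain x :: 'a where "x \<noteq> 0" by blast
  interpret f: module_hom scale scale "\<lambda>v. v * x" by (rule linear_mult_right)
  have inj: "inj (\<lambda>v. v * x)" using nzd \<open>x \<noteq> 0\<close> by (rule inj_mult_right)
  define Z' where "Z' = span ({x} * Z \<union> {x})"
  have "expands_by Z' c" unfolding expands_by_def
  proof (intro conjI allI impI)
    show "fd_subspace scale Z'" using assms(2)
      by (simp add: Z'_def fd_subspace_span finite_dim_times finite_dim_finite fd_subspace_iff)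
    fix V assume V: "fd_subspace scale V \<and> V \<noteq> {0}"
    let ?U = "V * {x}"
    have U_image: "?U = (\<lambda>v. v * x) ` V" by (rule set_times_singleton_right)
    have U_fd: "fd_subspace scale ?U"
      using V unfolding U_image fd_subspace_iff
      by (simp add: f.subspace_image finite_dim_image[OF linear_mult_right])
    have "?U \<noteq> {0}"
    proof
      assume "?U = {0}"
      then have "v * x = 0 * x" if "v \<in> V" for v using that unfolding U_image by auto
      then have "V \<subseteq> {0}" using injD[OF inj] by blast
      with V show False using subspace_0 unfolding fd_subspace_iff by blast
    qed
    with U_fd have "c * real (dim ?U) \<le> real (dim (span (?U * Z \<union> ?U)))" by (rule growth)
    moreover have "dim ?U = dim V"
      unfolding U_image using linear_mult_right inj by (rule dim_inj_image)
    moreover have "subspace_prod scale V Z' = span (?U * Z \<union> ?U)"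
      unfolding Z'_def subspace_prod_eq span_times_span_right set_times_Un_distrib mult.assoc ..
    ultimately show "c * real (dim V) \<le> real (dim (subspace_prod scale V Z'))" by simp
  qed
  then show ?thesis ..
qed

lemma expanding_if_not_amenable:
  assumes "finite G" and "gen_subalgebra scale G = UNIV" and "no_zero_divisors_alg TYPE('a)"
    and "\<not> amenable_alg scale"
  shows "\<exists>Z \<epsilon>. fd_subspace scale Z \<and> 0 < \<epsilon> \<and> (\<forall>V. fd_subspace scale V \<and> V \<noteq> {0} \<longrightarrow>
    (1 + \<epsilon>) * real (dim V) \<le> real (dim (span (V * Z \<union> V))))"
proof (rule ccontr)
  assume not_expanding: "\<not> ?thesis"
  have "\<exists>V. almost_invariant Z \<epsilon> V" if "fd_subspace scale Z" "0 < \<epsilon>" for Z \<epsilon>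
  proof -
    from not_expanding that have "\<not> (\<forall>V. fd_subspace scale V \<and> V \<noteq> {0} \<longrightarrow>
        (1 + \<epsilon>) * real (dim V) \<le> real (dim (span (V * Z \<union> V))))"
      by blast
    then show ?thesis unfolding almost_invariant_def by (auto simp: not_le intro: less_imp_le)
  qed
  with assms(1-3) have "amenable_alg scale" by (rule amenable_if_almost_invariant)
  with assms(4) show False ..
qed

end

theorem lemma2:
  fixes scale :: "'k::field \<Rightarrow> 'a::ring \<Rightarrow> 'a"
  assumes "affine_algebra scale"
    and "no_zero_divisors_alg TYPE('a)"
    and "\<not> amenable_alg scale"
  shows "\<exists>Z. fd_subspace scale Z \<and>
           (\<forall>V. fd_subspace scale V \<and> V \<noteq> {0} \<longrightarrow>
              real (vector_space.dim scale (subspace_prod scale V Z))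
                / real (vector_space.dim scale V) > 2)"
proof -
  interpret field_algebra scale
    using assms(1) unfolding affine_algebra_def by (blast intro: field_algebra_if_K_algebra)
  obtain G where "finite G" "gen_subalgebra scale G = UNIV"
    using assms(1) unfolding affine_algebra_def by blast
  with assms(2,3) obtain Z \<epsilon> where "fd_subspace scale Z" "0 < \<epsilon>" and
    "\<forall>V. fd_subspace scale V \<and> V \<noteq> {0} \<longrightarrow>
      (1 + \<epsilon>) * real (dim V) \<le> real (dim (span (V * Z \<union> V)))"
    by (metis expanding_if_not_amenable)
  with assms(2) obtain Z\<^sub>1 where "expands_by Z\<^sub>1 (1 + \<epsilon>)"
    by (metis expands_by_if_growth)
  then obtain Z\<^sub>2 c where "2 < c" and Z\<^sub>2: "expands_by Z\<^sub>2 c"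
    using exists_expands_by_gt \<open>0 < \<epsilon>\<close> by (metis less_add_same_cancel1)
  show ?thesis
  proof (intro exI[of _ Z\<^sub>2] conjI allI impI)
    show "fd_subspace scale Z\<^sub>2" using Z\<^sub>2 by (simp add: expands_by_def)
    fix V assume "fd_subspace scale V \<and> V \<noteq> {0}"
    with Z\<^sub>2 \<open>2 < c\<close> show "2 < real (dim (subspace_prod scale V Z\<^sub>2)) / real (dim V)"
      by (meson expands_by_ratio less_le_trans)
  qed
qed

end
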